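(* Let $\Sigma=\Sigma_c\,\dot\cup\,\Sigma_{uc}=\Sigma_o\,\dot\cup\,\Sigma_{uo}$ be a finite alphabet, and let $\mathbf{G}=\mathop{\|}_{k\in[1,N]}\mathbf{G}_k$ be the plant, with $L(\mathbf G)$ and $L_m(\mathbf G)$ its closed and marked behaviors. Let the specification be $E=\mathop{\|}_{p\in\mathcal P}E_p$ with $E_p\subseteq\Sigma_{e,p}^*$ and $\Sigma_e=\bigcup_{p}\Sigma_{e,p}$, and let $P_e:\Sigma^*\to\Sigma_e^*$ be the natural projection. For each $p\in\mathcal P$, let $\mathbf G_p=\|\{\mathbf G_k: \Sigma_k\cap\Sigma_{e,p}\neq\emptyset\}$ have alphabet $\Sigma_p\supseteq\Sigma_{e,p}$, and let $P_p:\Sigma^*\to\Sigma_p^*$ be the natural projection. Assume every component is relevant to some specification, so that $$L(\mathbf G)=\bigcap_{p}P_p^{-1}L(\mathbf G_p),\qquad L_m(\mathbf G)=\bigcap_p P_p^{-1}L_m(\mathbf G_p).$$ Assume the following. (H1) For each $p\in\mathcal P$ there is a generator $\mathbf{SUP}_p$ over $\Sigma_p$ (a partial-observation decentralized supervisor) with $$L_m(\mathbf G_p)\cap L_m(\mathbf{SUP}_p)=K_p,\qquad L(\mathbf G_p)\cap L(\mathbf{SUP}_p)=\overline{K_p},$$ where $K_p=\sup\mathcal{CO}(E_p\,\|\,L_m(\mathbf G_p))\subseteq E_p\,\|\,L_m(\mathbf G_p)$. (H2) There are generators $\mathbf{CO}_q$ over alphabets $\Sigma_q\subseteq\Sigma$,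 $q\in\mathcal Q$ (partial-observation coordinators), with natural projections $P_q:\Sigma^*\to\Sigma_q^*$. Define $$L_m(\mathbf{SYS})=L_m(\mathbf G)\cap\bigcap_p P_p^{-1}L_m(\mathbf{SUP}_p)\cap\bigcap_q P_q^{-1}L_m(\mathbf{CO}_q),$$ $$L(\mathbf{SYS})=L(\mathbf G)\cap\bigcap_p P_p^{-1}L(\mathbf{SUP}_p)\cap\bigcap_q P_q^{-1}L(\mathbf{CO}_q).$$ Assume these are nonblocking, i.e. $L(\mathbf{SYS})=\overline{L_m(\mathbf{SYS})}$. (H3) For each $p$ and each $\alpha\in\Sigma_{c,p}:=\Sigma_c\cap\Sigma_p$, there is a partial-observation local controller $\mathbf{LOC}_{\alpha,p}$ for $\alpha$ with alphabet $\Sigma_{\alpha,p}\subseteq\Sigma_p$. These satisfy $$L(\mathbf G_p)\cap\big(\mathop{\|}_{\alpha\in\Sigma_{c,p}}L(\mathbf{LOC}_{\alpha,p})\big)=L(\mathbf G_p)\cap L(\mathbf{SUP}_p),$$ $$L_m(\mathbf G_p)\cap\big(\mathop{\|}_{\alpha\in\Sigma_{c,p}}L_m(\mathbf{LOC}_{\alpha,p})\big)=L_m(\mathbf G_p)\cap L_m(\mathbf{SUP}_p).$$ Similarly, for each $q$ and each $\alpha\in\Sigma_{c,q}:=\Sigma_c\cap\Sigma_q$, there is a partial-observation local controller $\mathbf{LOC}_{\alpha,q}$ with alphabet $\Sigma_{\alpha,q}\subseteq\Sigma_q$. These satisfy $$L(\mathbf G)\cap\bigcap_{\alpha\in\Sigma_{c,q}}P_{\alpha,q}^{-1}L(\mathbf{LOC}_{\alpha,q})=L(\mathbf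 G)\cap P_q^{-1}L(\mathbf{CO}_q),$$ and the analogous identity holds with $L$ replaced by $L_m$ throughout. Here $P_{\alpha,q}:\Sigma^*\to\Sigma_{\alpha,q}^*$ is the natural projection. For each $\alpha\in\Sigma_c$, let $\mathbf{LOC}_\alpha$, with alphabet $\Sigma_\alpha$, be the synchronous product of all $\mathbf{LOC}_{\alpha,p}$ (over $p$ with $\alpha\in\Sigma_p$) and all $\mathbf{LOC}_{\alpha,q}$ (over $q$ with $\alpha\in\Sigma_q$). If there are none, $\mathbf{LOC}_\alpha$ is the one-state marked generator over $\{\alpha\}$ with an $\alpha$-selfloop. Let $P_\alpha:\Sigma^*\to\Sigma_\alpha^*$ be the natural projection, and set $$L_m(\mathbf{LOC})=\bigcap_{\alpha\in\Sigma_c}P_\alpha^{-1}L_m(\mathbf{LOC}_\alpha),\qquad L(\mathbf{LOC})=\bigcap_{\alpha\in\Sigma_c}P_\alpha^{-1}L(\mathbf{LOC}_\alpha).$$ Then each $\mathbf{LOC}_\alpha$ is a partial-observation local controller for $\alpha$, and $$L_m(\mathbf G)\cap L_m(\mathbf{LOC})\subseteq L_m(\mathbf G)\cap P_e^{-1}E,$$ $$L(\mathbf G)\cap L(\mathbf{LOC})=\overline{L_m(\mathbf G)\cap L_m(\mathbf{LOC})}.$$ Moreover, $L(\mathbf G)\cap L(\mathbf{LOC})=L(\mathbf{SYS})$ and $L_m(\mathbf G)\cap L_m(\mathbf{LOC})=L_m(\mathbf{SYS})$.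
   Context: Generators and languages. A generator $\mathbf G=(Q,\Sigma,\delta,q_0,Q_m)$ is a finite automaton with partial transition function $\delta$. Its closed behavior is $L(\mathbf G)=\{s\in\Sigma^*:\delta(q_0,s)\text{ defined}\}$ and its marked behavior is $L_m(\mathbf G)=\{s\in L(\mathbf G):\delta(q_0,s)\in Q_m\}$. An overbar denotes prefix closure. Projections and synchronous product. For $\Sigma'\subseteq\Sigma$, the natural projection $\Sigma^*\to\Sigma'^*$ erases the events not in $\Sigma'$, and $P^{-1}$ denotes its inverse image. The synchronous product of languages $L_i\subseteq\Sigma_i^*$ is $\bigcap_i P_i^{-1}L_i$ over $\bigcup_i\Sigma_i$. The synchronous product of generators is the generator realizing the synchronous product of both closed and marked behaviors. Controllability. $\Sigma_c$ and $\Sigma_{uc}$ are the controllable and uncontrollable events. A language $K\subseteq L_m(\mathbf G)$ is controllable if $\overline K\Sigma_{uc}\cap L(\mathbf G)\subseteq\overline K$. Relative observability. $\Sigma_o$ and $\Sigma_{uo}$ are the observable and unobservable events, and $P:\Sigma^*\to\Sigma_o^*$ is the natural projection. Given $C\subseteq L_m(\mathbf G)$, a language $K\subseteq C$ is $C$-observable if, for all $s,s'$ with $P(s)=P(s')$, both of the following hold: (i) for all $\sigma\in\Sigma$: if $s\sigma\in\overline K$, $s'\in\overline C$ and $s'\sigma\in L(\mathbf G)$, then $s'\sigma\in\overline K$; (ii) if $s\in K$ and $s'\in\overline C\cap L_m(\mathbf G)$, then $s'\in K$. $\sup\mathcal{CO}(F)$ denotes the supremal controllable and $C$-observable sublanguage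 of $F$. Local controllers. A partial-observation local controller for $\alpha\in\Sigma_c$ is a generator $\mathbf{LOC}_\alpha=(Y_\alpha,\Sigma_\alpha,\eta_\alpha,y_{0,\alpha},Y_{m,\alpha})$ satisfying: (i) $\Sigma_\alpha\subseteq\Sigma_o\cup\{\alpha\}$, and it enables/disables only $\alpha$; (ii) every transition labelled by an unobservable event is a selfloop, i.e. for all $y$ and all $\sigma\in\Sigma_{uo}$, if $\eta_\alpha(y,\sigma)$ is defined then $\eta_\alpha(y,\sigma)=y$. *)

theory Defs
  imports Main "HOL-Library.FuncSet"
begin

text \<open>Strings over the (finite) alphabet are lists; the full alphabet Sigma is the
  universe of a finite event type.\<close>

definition pre :: "'e list set \<Rightarrow> 'e list set" where
  "pre L = {s. \<exists>t. s @ t \<in> L}"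

definition proj :: "'e set \<Rightarrow> 'e list \<Rightarrow> 'e list" where
  "proj A s = filter (\<lambda>x. x \<in> A) s"

definition invp :: "'e set \<Rightarrow> 'e list set \<Rightarrow> 'e list set" where
  "invp A L = {s. proj A s \<in> L}"

definition syncL :: "'i set \<Rightarrow> ('i \<Rightarrow> 'e set) \<Rightarrow> ('i \<Rightarrow> 'e list set) \<Rightarrow> 'e list set" where
  "syncL I A L = {s \<in> lists (\<Union>i\<in>I. A i). \<forall>i\<in>I. proj (A i) s \<in> L i}"

definition sync2 :: "'e set \<Rightarrow> 'e list set \<Rightarrow> 'e set \<Rightarrow> 'e list set \<Rightarrow> 'e list set" where
  "sync2 A L1 B L2 = {s \<in> lists (A \<union> B). proj A s \<in> L1 \<and> proj B s \<in> L2}"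

record ('q, 'e) gen =
  states :: "'q set"
  alph   :: "'e set"
  trans  :: "'q \<Rightarrow> 'e \<Rightarrow> 'q option"
  init   :: "'q"
  marked :: "'q set"

definition wf_gen :: "('q, 'e) gen \<Rightarrow> bool" where
  "wf_gen g \<longleftrightarrow> finite (states g) \<and> finite (alph g) \<and> init g \<in> states g \<and>
     marked g \<subseteq> states g \<and>
     (\<forall>q e q'. trans g q e = Some q' \<longrightarrow> q \<in> states g \<and> e \<in> alph g \<and> q' \<in> states g)"

fun run :: "('q, 'e) gen \<Rightarrow> 'q \<Rightarrow> 'e list \<Rightarrow> 'q option" where
  "run g q [] = Some q"
| "run g q (e # s) = (case trans g q e of None \<Rightarrow> None | Some q' \<Rightarrow> run g q' s)"

definition Lc :: "('q, 'e) gen \<Rightarrow> 'e list set" where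
  "Lc g = {s. run g (init g) s \<noteq> None}"

definition Lm :: "('q, 'e) gen \<Rightarrow> 'e list set" where
  "Lm g = {s. \<exists>q. run g (init g) s = Some q \<and> q \<in> marked g}"

definition gprod :: "'i set \<Rightarrow> ('i \<Rightarrow> ('q, 'e) gen) \<Rightarrow> ('i \<Rightarrow> 'q, 'e) gen" where
  "gprod I G = \<lparr> states = (\<Pi>\<^sub>E i\<in>I. states (G i)),
     alph = (\<Union>i\<in>I. alph (G i)),
     trans = (\<lambda>x e. if e \<in> (\<Union>i\<in>I. alph (G i)) \<and> x \<in> (\<Pi>\<^sub>E i\<in>I. states (G i)) \<and>
                       (\<forall>i\<in>I. e \<in> alph (G i) \<longrightarrow> trans (G i) (x i) e \<noteq> None)
                     then Some (\<lambda>i. if i \<in> I \<and> e \<in> alph (G i)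
                                    then the (trans (G i) (x i) e) else x i)
                     else None),
     init = (\<lambda>i\<in>I. init (G i)),
     marked = (\<Pi>\<^sub>E i\<in>I. marked (G i)) \<rparr>"

definition selfloop_gen :: "'e \<Rightarrow> ('i \<Rightarrow> 'q, 'e) gen" where
  "selfloop_gen a = \<lparr> states = {(\<lambda>_. undefined)}, alph = {a},
     trans = (\<lambda>x e. if x = (\<lambda>_. undefined) \<and> e = a then Some x else None),
     init = (\<lambda>_. undefined), marked = {(\<lambda>_. undefined)} \<rparr>"

definition controllable :: "'e list set \<Rightarrow> 'e set \<Rightarrow> 'e list set \<Rightarrow> bool" where
  "controllable L Sc K \<longleftrightarrow>
     (\<forall>s \<sigma>. s \<in> pre K \<and> \<sigma> \<notin> Sc \<and> s @ [\<sigma>] \<in> L \<longrightarrow> s @ [\<sigma>] \<in> pre K)"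

definition rel_observable ::
  "'e list set \<Rightarrow> 'e list set \<Rightarrow> 'e set \<Rightarrow> 'e list set \<Rightarrow> 'e list set \<Rightarrow> bool" where
  "rel_observable L LmG So C K \<longleftrightarrow> K \<subseteq> C \<and>
     (\<forall>s s'. proj So s = proj So s' \<longrightarrow>
        (\<forall>\<sigma>. s @ [\<sigma>] \<in> pre K \<and> s' \<in> pre C \<and> s' @ [\<sigma>] \<in> L \<longrightarrow> s' @ [\<sigma>] \<in> pre K) \<and>
        (s \<in> K \<and> s' \<in> pre C \<inter> LmG \<longrightarrow> s' \<in> K))"

definition supCO ::
  "'e list set \<Rightarrow> 'e list set \<Rightarrow> 'e set \<Rightarrow> 'e set \<Rightarrow> 'e list set \<Rightarrow> 'e list set" where
  "supCO L LmG Sc So F = \<Union>{K. K \<subseteq> F \<and> controllable L Sc K \<and> rel_observable L LmG So F K}"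

definition is_local_controller :: "'e set \<Rightarrow> 'e \<Rightarrow> ('q, 'e) gen \<Rightarrow> bool" where
  "is_local_controller So a g \<longleftrightarrow> wf_gen g \<and> alph g \<subseteq> So \<union> {a} \<and>
     (\<forall>y \<sigma>. \<sigma> \<notin> So \<and> trans g y \<sigma> \<noteq> None \<longrightarrow> trans g y \<sigma> = Some y)"

definition Gsub :: "nat \<Rightarrow> (nat \<Rightarrow> ('q, 'e) gen) \<Rightarrow> 'e set \<Rightarrow> (nat \<Rightarrow> 'q, 'e) gen" where
  "Gsub N Gk Se = gprod {k \<in> {1..N}. alph (Gk k) \<inter> Se \<noteq> {}} Gk"

definition LOCalpha ::
  "'p set \<Rightarrow> ('p \<Rightarrow> 'e set) \<Rightarrow> 'c set \<Rightarrow> ('c \<Rightarrow> 'e set) \<Rightarrow>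
   ('e \<Rightarrow> 'p \<Rightarrow> ('q, 'e) gen) \<Rightarrow> ('e \<Rightarrow> 'c \<Rightarrow> ('q, 'e) gen) \<Rightarrow> 'e \<Rightarrow> ('p + 'c \<Rightarrow> 'q, 'e) gen" where
  "LOCalpha P Sp Q Sq LOCp LOCq a =
     (let I = Inl ` {p \<in> P. a \<in> Sp p} \<union> Inr ` {q \<in> Q. a \<in> Sq q}
      in if I = {} then selfloop_gen a else gprod I (case_sum (LOCp a) (LOCq a)))"

end

theory Submission
  imports Defs
begin

(* Grouped by supervisor and coordinator instead of by event, L(LOC) is the intersection of the
   inverse-projected languages of all local controllers LOC_{alpha,p} and LOC_{alpha,q}. Since
   L(G) <= P_p^-1 L(G_p), (H3) lets the controllers of p act as SUP_p and those of q as CO_q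
   inside the plant, so G || LOC coincides with SYS in closed and in marked behaviour.
   Nonblocking is then (H2), and the specification holds because each K_p lies in
   E_p || L_m(G_p). *)

lemma proj_in_lists: "proj A s \<in> lists A"
  by (auto simp: proj_def)

lemma proj_proj_subset: "A \<subseteq> B \<Longrightarrow> proj A (proj B s) = proj A s"
  by (induction s) (auto simp: proj_def)

lemma proj_Cons: "proj A (e # s) = (if e \<in> A then e # proj A s else proj A s)"
  by (simp add: proj_def)

lemma invp_mono: "L \<subseteq> L' \<Longrightarrow> invp A L \<subseteq> invp A L'"
  by (auto simp: invp_def)

lemma invp_Int: "invp A (L \<inter> L') = invp A L \<inter> invp A L'"
  by (auto simp: invp_def)

lemma invp_INT: "invp A (\<Inter>i\<in>I. L i) = (\<Inter>i\<in>I. invp A (L i))"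
  by (auto simp: invp_def)

lemma invp_invp_subset: "A \<subseteq> B \<Longrightarrow> invp B (invp A L) = invp A L"
  by (simp add: invp_def proj_proj_subset)

lemma invp_lists: "invp A (lists A) = UNIV"
  by (simp add: invp_def proj_in_lists)

lemma syncL_eq: "syncL I A L = lists (\<Union>i\<in>I. A i) \<inter> (\<Inter>i\<in>I. invp (A i) (L i))"
  by (auto simp: syncL_def invp_def)

lemma invp_syncL: "invp (\<Union>i\<in>I. A i) (syncL I A L) = (\<Inter>i\<in>I. invp (A i) (L i))"
proof -
  have "invp (A i) (L i) = invp (\<Union>i\<in>I. A i) (invp (A i) (L i))" if "i \<in> I" for i
    using that by (intro invp_invp_subset[symmetric]) auto
  then show ?thesis
    by (simp add: syncL_eq invp_Int invp_INT invp_lists)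
qed

lemma sync2_subset_invp: "sync2 A L B L' \<subseteq> invp A L"
  by (auto simp: sync2_def invp_def)

lemma supCO_subset: "supCO L LmG Sc So F \<subseteq> F"
  by (auto simp: supCO_def)

section \<open>Synchronous product of generators\<close>

lemma alph_gprod: "alph (gprod I G) = (\<Union>i\<in>I. alph (G i))"
  by (simp add: gprod_def)

lemma marked_gprod: "marked (gprod I G) = (\<Pi>\<^sub>E i\<in>I. marked (G i))"
  by (simp add: gprod_def)

lemma Lm_iff_Lc: "s \<in> Lm g \<longleftrightarrow> s \<in> Lc g \<and> the (run g (init g) s) \<in> marked g"
  by (auto simp: Lm_def Lc_def)

lemma gprod_successor_in_states:
  assumes wf: "\<forall>i\<in>I. wf_gen (G i)" and x: "x \<in> (\<Pi>\<^sub>E i\<in>I. states (G i))"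
    and enabled: "\<forall>i\<in>I. e \<in> alph (G i) \<longrightarrow> trans (G i) (x i) e \<noteq> None"
  shows "(\<lambda>i. if i \<in> I \<and> e \<in> alph (G i) then the (trans (G i) (x i) e) else x i)
           \<in> (\<Pi>\<^sub>E i\<in>I. states (G i))"
proof -
  have "the (trans (G i) (x i) e) \<in> states (G i)" if "i \<in> I" "e \<in> alph (G i)" for i
    using wf enabled that unfolding wf_gen_def by fastforce
  then show ?thesis
    using x by (auto simp: PiE_def extensional_def)
qed

lemma run_gprod:
  assumes wf: "\<forall>i\<in>I. wf_gen (G i)" and x: "x \<in> (\<Pi>\<^sub>E i\<in>I. states (G i))"
  shows "run (gprod I G) x s =
    (if set s \<subseteq> (\<Union>i\<in>I. alph (G i)) \<and> (\<forall>i\<in>I. run (G i) (x i) (proj (alph (G i)) s) \<noteq> None)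
     then Some (\<lambda>i\<in>I. the (run (G i) (x i) (proj (alph (G i)) s))) else None)"
  using x
proof (induction s arbitrary: x)
  case Nil
  then show ?case
    by (auto simp: proj_def PiE_def extensional_def fun_eq_iff)
next
  case (Cons e s)
  show ?case
  proof (cases "e \<in> (\<Union>i\<in>I. alph (G i)) \<and>
      (\<forall>i\<in>I. e \<in> alph (G i) \<longrightarrow> trans (G i) (x i) e \<noteq> None)")
    case True
    define x' where "x' = (\<lambda>i. if i \<in> I \<and> e \<in> alph (G i) then the (trans (G i) (x i) e) else x i)"
    have x': "x' \<in> (\<Pi>\<^sub>E i\<in>I. states (G i))"
      unfolding x'_def using gprod_successor_in_states[OF wf Cons.prems] True by blast
    have component:
        "run (G i) (x i) (proj (alph (G i)) (e # s)) = run (G i) (x' i) (proj (alph (G i)) s)"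
      if "i \<in> I" for i
      using True that by (auto simp: proj_Cons x'_def)
    have "run (gprod I G) x (e # s) = run (gprod I G) x' s"
      using True Cons.prems by (simp add: gprod_def x'_def)
    also have "\<dots> = (if set s \<subseteq> (\<Union>i\<in>I. alph (G i)) \<and>
          (\<forall>i\<in>I. run (G i) (x' i) (proj (alph (G i)) s) \<noteq> None)
        then Some (\<lambda>i\<in>I. the (run (G i) (x' i) (proj (alph (G i)) s))) else None)"
      by (rule Cons.IH[OF x'])
    also have "(\<lambda>i\<in>I. the (run (G i) (x' i) (proj (alph (G i)) s))) =
        (\<lambda>i\<in>I. the (run (G i) (x i) (proj (alph (G i)) (e # s))))"
      by (intro restrict_ext) (simp add: component)
    finally show ?thesis
      using True component by simp
  next
    case False
    then have "trans (gprod I G) x e = None"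
      by (simp add: gprod_def)
    moreover have "\<not> (set (e # s) \<subseteq> (\<Union>i\<in>I. alph (G i)) \<and>
        (\<forall>i\<in>I. run (G i) (x i) (proj (alph (G i)) (e # s)) \<noteq> None))"
    proof
      assume runs: "set (e # s) \<subseteq> (\<Union>i\<in>I. alph (G i)) \<and>
        (\<forall>i\<in>I. run (G i) (x i) (proj (alph (G i)) (e # s)) \<noteq> None)"
      with False obtain i where "i \<in> I" "e \<in> alph (G i)" "trans (G i) (x i) e = None"
        by auto
      with runs show False
        by (auto simp: proj_Cons)
    qed
    ultimately show ?thesis
      by simp
  qed
qed

lemma run_gprod_init:
  assumes wf: "\<forall>i\<in>I. wf_gen (G i)"
  shows "run (gprod I G) (init (gprod I G)) s =
    (if set s \<subseteq> (\<Union>i\<in>I. alph (G i)) \<and> (\<forall>i\<in>I. proj (alph (G i)) s \<in> Lc (G i))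
     then Some (\<lambda>i\<in>I. the (run (G i) (init (G i)) (proj (alph (G i)) s))) else None)"
proof -
  have "init (gprod I G) \<in> (\<Pi>\<^sub>E i\<in>I. states (G i))"
    using wf by (auto simp: gprod_def wf_gen_def)
  from run_gprod[OF wf this] show ?thesis
    by (simp add: gprod_def Lc_def cong: restrict_cong)
qed

lemma Lc_gprod:
  assumes "\<forall>i\<in>I. wf_gen (G i)"
  shows "Lc (gprod I G) = syncL I (\<lambda>i. alph (G i)) (\<lambda>i. Lc (G i))"
proof (rule set_eqI)
  fix s
  show "s \<in> Lc (gprod I G) \<longleftrightarrow> s \<in> syncL I (\<lambda>i. alph (G i)) (\<lambda>i. Lc (G i))"
    using run_gprod_init[OF assms, of s] unfolding Lc_def [of "gprod I G"] syncL_def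
    by (auto simp: in_lists_conv_set subset_iff)
qed

lemma Lm_gprod:
  assumes wf: "\<forall>i\<in>I. wf_gen (G i)"
  shows "Lm (gprod I G) = syncL I (\<lambda>i. alph (G i)) (\<lambda>i. Lm (G i))"
proof (rule set_eqI)
  fix s
  have "s \<in> Lm (gprod I G) \<longleftrightarrow> s \<in> syncL I (\<lambda>i. alph (G i)) (\<lambda>i. Lc (G i)) \<and>
      (\<forall>i\<in>I. the (run (G i) (init (G i)) (proj (alph (G i)) s)) \<in> marked (G i))"
    using run_gprod_init[OF wf, of s]
    by (auto simp: Lm_iff_Lc [of s] Lc_gprod[OF wf] syncL_def in_lists_conv_set marked_gprod)
  also have "\<dots> \<longleftrightarrow> s \<in> syncL I (\<lambda>i. alph (G i)) (\<lambda>i. Lm (G i))"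
    by (auto simp: syncL_def Lm_iff_Lc)
  finally show "s \<in> Lm (gprod I G) \<longleftrightarrow> s \<in> syncL I (\<lambda>i. alph (G i)) (\<lambda>i. Lm (G i))" .
qed

lemma invp_Lc_gprod:
  "\<forall>i\<in>I. wf_gen (G i) \<Longrightarrow>
    invp (alph (gprod I G)) (Lc (gprod I G)) = (\<Inter>i\<in>I. invp (alph (G i)) (Lc (G i)))"
  by (simp add: Lc_gprod alph_gprod invp_syncL)

lemma invp_Lm_gprod:
  "\<forall>i\<in>I. wf_gen (G i) \<Longrightarrow>
    invp (alph (gprod I G)) (Lm (gprod I G)) = (\<Inter>i\<in>I. invp (alph (G i)) (Lm (G i)))"
  by (simp add: Lm_gprod alph_gprod invp_syncL)

lemma Lc_gprod_subset_invp:
  assumes wf: "\<forall>i\<in>I. wf_gen (G i)" and "K \<subseteq> I"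
  shows "Lc (gprod I G) \<subseteq> invp (alph (gprod K G)) (Lc (gprod K G))"
proof -
  have "Lc (gprod I G) \<subseteq> (\<Inter>i\<in>I. invp (alph (G i)) (Lc (G i)))"
    by (simp add: Lc_gprod[OF wf] syncL_eq)
  also have "\<dots> \<subseteq> (\<Inter>i\<in>K. invp (alph (G i)) (Lc (G i)))"
    using \<open>K \<subseteq> I\<close> by (rule INF_superset_mono) simp
  also have "\<dots> = invp (alph (gprod K G)) (Lc (gprod K G))"
    using wf \<open>K \<subseteq> I\<close> by (simp add: invp_Lc_gprod subset_iff)
  finally show ?thesis .
qed

lemma Lm_gprod_subset_invp:
  assumes wf: "\<forall>i\<in>I. wf_gen (G i)" and "K \<subseteq> I"
  shows "Lm (gprod I G) \<subseteq> invp (alph (gprod K G)) (Lm (gprod K G))"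
proof -
  have "Lm (gprod I G) \<subseteq> (\<Inter>i\<in>I. invp (alph (G i)) (Lm (G i)))"
    by (simp add: Lm_gprod[OF wf] syncL_eq)
  also have "\<dots> \<subseteq> (\<Inter>i\<in>K. invp (alph (G i)) (Lm (G i)))"
    using \<open>K \<subseteq> I\<close> by (rule INF_superset_mono) simp
  also have "\<dots> = invp (alph (gprod K G)) (Lm (gprod K G))"
    using wf \<open>K \<subseteq> I\<close> by (simp add: invp_Lm_gprod subset_iff)
  finally show ?thesis .
qed

lemma wf_gen_gprod:
  assumes fin: "finite I" and wf: "\<forall>i\<in>I. wf_gen (G i)"
  shows "wf_gen (gprod I G)"
  unfolding wf_gen_def
proof (intro conjI allI impI)
  show "finite (states (gprod I G))" "finite (alph (gprod I G))"
    using fin wf by (auto simp: gprod_def wf_gen_def intro!: finite_PiE)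
  show "init (gprod I G) \<in> states (gprod I G)" "marked (gprod I G) \<subseteq> states (gprod I G)"
    using wf by (fastforce simp: gprod_def wf_gen_def PiE_iff)+
  fix x e x' assume step: "trans (gprod I G) x e = Some x'"
  then have "e \<in> (\<Union>i\<in>I. alph (G i))" and x: "x \<in> (\<Pi>\<^sub>E i\<in>I. states (G i))"
    and enabled: "\<forall>i\<in>I. e \<in> alph (G i) \<longrightarrow> trans (G i) (x i) e \<noteq> None"
    by (auto simp: gprod_def split: if_splits)
  then show "x \<in> states (gprod I G)" "e \<in> alph (gprod I G)"
    by (simp_all add: gprod_def)
  show "x' \<in> states (gprod I G)"
    using step gprod_successor_in_states[OF wf x enabled] by (auto simp: gprod_def split: if_splits)
qed

lemma is_local_controller_gprod:
  assumes fin: "finite I" and lc: "\<forall>i\<in>I. is_local_controller So a (G i)"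
  shows "is_local_controller So a (gprod I G)"
proof -
  have "wf_gen (gprod I G)"
    using lc by (intro wf_gen_gprod[OF fin]) (simp add: is_local_controller_def)
  moreover have "alph (gprod I G) \<subseteq> So \<union> {a}"
    using lc by (auto simp: gprod_def is_local_controller_def)
  moreover have "trans (gprod I G) y \<sigma> = Some y"
    if unobs: "\<sigma> \<notin> So" and "trans (gprod I G) y \<sigma> \<noteq> None" for y \<sigma>
  proof -
    have y: "y \<in> (\<Pi>\<^sub>E i\<in>I. states (G i))" "\<sigma> \<in> (\<Union>i\<in>I. alph (G i))"
      and enabled: "\<forall>i\<in>I. \<sigma> \<in> alph (G i) \<longrightarrow> trans (G i) (y i) \<sigma> \<noteq> None"
      using that(2) by (auto simp: gprod_def split: if_splits)
    have "trans (G i) (y i) \<sigma> = Some (y i)" if "i \<in> I" "\<sigma> \<in> alph (G i)" for i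
      using lc enabled unobs that unfolding is_local_controller_def by blast
    then show ?thesis
      using y enabled by (simp add: gprod_def fun_eq_iff)
  qed
  ultimately show ?thesis
    unfolding is_local_controller_def by blast
qed

lemma run_selfloop_gen:
  "run (selfloop_gen a) (\<lambda>_. undefined) s = (if set s \<subseteq> {a} then Some (\<lambda>_. undefined) else None)"
  by (induction s) (auto simp: selfloop_gen_def)

lemma init_selfloop_gen: "init (selfloop_gen a) = (\<lambda>_. undefined)"
  and marked_selfloop_gen: "marked (selfloop_gen a) = {\<lambda>_. undefined}"
  and alph_selfloop_gen: "alph (selfloop_gen a) = {a}"
  by (simp_all add: selfloop_gen_def)

lemma Lc_selfloop_gen: "Lc (selfloop_gen a) = lists {a}"
  by (auto simp: Lc_def init_selfloop_gen run_selfloop_gen)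

lemma Lm_selfloop_gen: "Lm (selfloop_gen a) = lists {a}"
  by (auto simp: Lm_def init_selfloop_gen marked_selfloop_gen run_selfloop_gen)

lemma is_local_controller_selfloop_gen: "is_local_controller So a (selfloop_gen a)"
  by (auto simp: is_local_controller_def wf_gen_def selfloop_gen_def split: if_splits)

lemma LOCalpha_eq:
  "LOCalpha P Sp Q Sq LOCp LOCq a =
    (if {p\<in>P. a \<in> Sp p} = {} \<and> {q\<in>Q. a \<in> Sq q} = {} then selfloop_gen a
     else gprod (Inl ` {p\<in>P. a \<in> Sp p} \<union> Inr ` {q\<in>Q. a \<in> Sq q}) (case_sum (LOCp a) (LOCq a)))"
  by (simp add: LOCalpha_def Let_def)

lemma is_local_controller_LOCalpha:
  assumes "finite P" "finite Q"
    and "\<forall>p\<in>P. a \<in> Sp p \<longrightarrow> is_local_controller So a (LOCp a p)"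
    and "\<forall>q\<in>Q. a \<in> Sq q \<longrightarrow> is_local_controller So a (LOCq a q)"
  shows "is_local_controller So a (LOCalpha P Sp Q Sq LOCp LOCq a)"
  using assms
  by (auto simp: LOCalpha_eq is_local_controller_selfloop_gen intro!: is_local_controller_gprod)

lemma INT_Inl_Inr: "(\<Inter>i\<in>Inl ` A \<union> Inr ` B. F i) = (\<Inter>x\<in>A. F (Inl x)) \<inter> (\<Inter>y\<in>B. F (Inr y))"
  by auto

lemma invp_Lc_LOCalpha:
  assumes "\<forall>p\<in>P. a \<in> Sp p \<longrightarrow> wf_gen (LOCp a p)" and "\<forall>q\<in>Q. a \<in> Sq q \<longrightarrow> wf_gen (LOCq a q)"
  shows "invp (alph (LOCalpha P Sp Q Sq LOCp LOCq a)) (Lc (LOCalpha P Sp Q Sq LOCp LOCq a)) =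
      (\<Inter>p\<in>{p\<in>P. a \<in> Sp p}. invp (alph (LOCp a p)) (Lc (LOCp a p)))
      \<inter> (\<Inter>q\<in>{q\<in>Q. a \<in> Sq q}. invp (alph (LOCq a q)) (Lc (LOCq a q)))"
proof -
  have "\<forall>i\<in>Inl ` {p\<in>P. a \<in> Sp p} \<union> Inr ` {q\<in>Q. a \<in> Sq q}. wf_gen (case_sum (LOCp a) (LOCq a) i)"
    using assms by auto
  then show ?thesis
    by (auto simp: LOCalpha_eq invp_Lc_gprod INT_Inl_Inr Lc_selfloop_gen alph_selfloop_gen invp_lists)
qed

lemma invp_Lm_LOCalpha:
  assumes "\<forall>p\<in>P. a \<in> Sp p \<longrightarrow> wf_gen (LOCp a p)" and "\<forall>q\<in>Q. a \<in> Sq q \<longrightarrow> wf_gen (LOCq a q)"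
  shows "invp (alph (LOCalpha P Sp Q Sq LOCp LOCq a)) (Lm (LOCalpha P Sp Q Sq LOCp LOCq a)) =
      (\<Inter>p\<in>{p\<in>P. a \<in> Sp p}. invp (alph (LOCp a p)) (Lm (LOCp a p)))
      \<inter> (\<Inter>q\<in>{q\<in>Q. a \<in> Sq q}. invp (alph (LOCq a q)) (Lm (LOCq a q)))"
proof -
  have "\<forall>i\<in>Inl ` {p\<in>P. a \<in> Sp p} \<union> Inr ` {q\<in>Q. a \<in> Sq q}. wf_gen (case_sum (LOCp a) (LOCq a) i)"
    using assms by auto
  then show ?thesis
    by (auto simp: LOCalpha_eq invp_Lm_gprod INT_Inl_Inr Lm_selfloop_gen alph_selfloop_gen invp_lists)
qed

section \<open>Local controllers realize supervisors and coordinators\<close>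

lemma Int_invp_cong: "M \<subseteq> invp A L \<Longrightarrow> L \<inter> X = L \<inter> Y \<Longrightarrow> M \<inter> invp A X = M \<inter> invp A Y"
  by (auto simp: invp_def)

lemma Int_INT_cong: "(\<And>i. i \<in> I \<Longrightarrow> M \<inter> A i = M \<inter> B i) \<Longrightarrow> M \<inter> (\<Inter>i\<in>I. A i) = M \<inter> (\<Inter>i\<in>I. B i)"
  by blast

lemma Int_invp_supervisor_subset:
  assumes plant: "M \<subseteq> invp B Lg" and supervisor: "Lg \<inter> Ls = supCO L Lg Sc So (sync2 A Es B Lg)"
    and "A \<subseteq> B"
  shows "M \<inter> invp B Ls \<subseteq> invp A Es"
proof -
  have "M \<inter> invp B Ls \<subseteq> invp B (Lg \<inter> Ls)"
    using plant by (auto simp: invp_Int)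
  also have "\<dots> \<subseteq> invp B (sync2 A Es B Lg)"
    unfolding supervisor by (intro invp_mono supCO_subset)
  also have "\<dots> \<subseteq> invp B (invp A Es)"
    by (intro invp_mono sync2_subset_invp)
  also have "\<dots> = invp A Es"
    using \<open>A \<subseteq> B\<close> by (rule invp_invp_subset)
  finally show ?thesis .
qed

text \<open>M is the plant behaviour, Lg p that of the subplant of supervisor p over Sp p and Ls p that
  of the supervisor, Lco q the lifted coordinator q, and Lp, Lq the local controllers; closed and
  marked behaviour are both instances.\<close>

lemma plant_Int_local_controllers_eq:
  assumes plant: "\<forall>p\<in>P. M \<subseteq> invp (Sp p) (Lg p)"
    and local_p: "\<forall>p\<in>P. Lg p \<inter> (\<Inter>a\<in>S \<inter> Sp p. invp (Ap a p) (Lp a p)) = Lg p \<inter> Ls p"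
    and alph_p: "\<forall>p\<in>P. \<forall>a\<in>S \<inter> Sp p. Ap a p \<subseteq> Sp p"
    and local_q: "\<forall>q\<in>Q. M \<inter> (\<Inter>a\<in>S \<inter> Sq q. invp (Aq a q) (Lq a q)) = M \<inter> Lco q"
  shows "M \<inter> (\<Inter>a\<in>S. (\<Inter>p\<in>{p\<in>P. a \<in> Sp p}. invp (Ap a p) (Lp a p))
              \<inter> (\<Inter>q\<in>{q\<in>Q. a \<in> Sq q}. invp (Aq a q) (Lq a q)))
    = M \<inter> (\<Inter>p\<in>P. invp (Sp p) (Ls p)) \<inter> (\<Inter>q\<in>Q. Lco q)"
proof -
  have local_p_lifted: "M \<inter> (\<Inter>a\<in>S \<inter> Sp p. invp (Ap a p) (Lp a p)) = M \<inter> invp (Sp p) (Ls p)"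
    if p: "p \<in> P" for p
  proof -
    have "invp (Sp p) (\<Inter>a\<in>S \<inter> Sp p. invp (Ap a p) (Lp a p)) = (\<Inter>a\<in>S \<inter> Sp p. invp (Ap a p) (Lp a p))"
      unfolding invp_INT using alph_p p by (intro INF_cong refl invp_invp_subset) auto
    then have "M \<inter> (\<Inter>a\<in>S \<inter> Sp p. invp (Ap a p) (Lp a p)) =
        M \<inter> invp (Sp p) (\<Inter>a\<in>S \<inter> Sp p. invp (Ap a p) (Lp a p))"
      by simp
    also have "\<dots> = M \<inter> invp (Sp p) (Ls p)"
      by (rule Int_invp_cong[OF plant[rule_format, OF p] local_p[rule_format, OF p]])
    finally show ?thesis .
  qed
  have regroup: "(\<Inter>a\<in>S. (\<Inter>p\<in>{p\<in>P. a \<in> Sp p}. invp (Ap a p) (Lp a p))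
              \<inter> (\<Inter>q\<in>{q\<in>Q. a \<in> Sq q}. invp (Aq a q) (Lq a q))) =
      (\<Inter>p\<in>P. \<Inter>a\<in>S \<inter> Sp p. invp (Ap a p) (Lp a p)) \<inter> (\<Inter>q\<in>Q. \<Inter>a\<in>S \<inter> Sq q. invp (Aq a q) (Lq a q))"
    by blast
  have supervisors: "M \<inter> (\<Inter>p\<in>P. \<Inter>a\<in>S \<inter> Sp p. invp (Ap a p) (Lp a p)) = M \<inter> (\<Inter>p\<in>P. invp (Sp p) (Ls p))"
    using local_p_lifted by (rule Int_INT_cong)
  have coordinators: "M \<inter> (\<Inter>q\<in>Q. \<Inter>a\<in>S \<inter> Sq q. invp (Aq a q) (Lq a q)) = M \<inter> (\<Inter>q\<in>Q. Lco q)"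
    using local_q by (intro Int_INT_cong) simp
  have Int_Int_cong: "M \<inter> (A \<inter> B) = M \<inter> A' \<inter> B'" if "M \<inter> A = M \<inter> A'" "M \<inter> B = M \<inter> B'" for A A' B B'
    using that by blast
  show ?thesis
    unfolding regroup by (rule Int_Int_cong[OF supervisors coordinators])
qed

theorem theorem1:
  fixes Sc So :: "'e::finite set"
    and N :: nat and Gk :: "nat \<Rightarrow> ('s1, 'e) gen"
    and P :: "'p set" and Se :: "'p \<Rightarrow> 'e set" and E :: "'p \<Rightarrow> 'e list set"
    and SUPV :: "'p \<Rightarrow> ('s2, 'e) gen"
    and Q :: "'c set" and CO :: "'c \<Rightarrow> ('s3, 'e) gen"
    and LOCp :: "'e \<Rightarrow> 'p \<Rightarrow> ('s4, 'e) gen" and LOCq :: "'e \<Rightarrow> 'c \<Rightarrow> ('s4, 'e) gen"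
  assumes plant_wf: "\<forall>k\<in>{1..N}. wf_gen (Gk k)"
    and plant_alph: "(\<Union>k\<in>{1..N}. alph (Gk k)) = UNIV"
    and P_fin: "finite P" and Q_fin: "finite Q"
    and E_alph: "\<forall>p\<in>P. E p \<subseteq> lists (Se p)"
    and Gp_alph: "\<forall>p\<in>P. Se p \<subseteq> alph (Gsub N Gk (Se p))"
    and relevant: "\<forall>k\<in>{1..N}. \<exists>p\<in>P. alph (Gk k) \<inter> Se p \<noteq> {}"
    \<comment> \<open>(H1)\<close>
    and SUP_wf: "\<forall>p\<in>P. wf_gen (SUPV p) \<and> alph (SUPV p) = alph (Gsub N Gk (Se p))"
    and H1m: "\<forall>p\<in>P. Lm (Gsub N Gk (Se p)) \<inter> Lm (SUPV p) =
                supCO (Lc (Gsub N Gk (Se p))) (Lm (Gsub N Gk (Se p))) Sc So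
                  (sync2 (Se p) (E p) (alph (Gsub N Gk (Se p))) (Lm (Gsub N Gk (Se p))))"
    and H1c: "\<forall>p\<in>P. Lc (Gsub N Gk (Se p)) \<inter> Lc (SUPV p) =
                pre (supCO (Lc (Gsub N Gk (Se p))) (Lm (Gsub N Gk (Se p))) Sc So
                  (sync2 (Se p) (E p) (alph (Gsub N Gk (Se p))) (Lm (Gsub N Gk (Se p)))))"
    \<comment> \<open>(H2)\<close>
    and CO_wf: "\<forall>q\<in>Q. wf_gen (CO q)"
    and H2: "Lc (gprod {1..N} Gk) \<inter> (\<Inter>p\<in>P. invp (alph (SUPV p)) (Lc (SUPV p)))
               \<inter> (\<Inter>q\<in>Q. invp (alph (CO q)) (Lc (CO q)))
             = pre (Lm (gprod {1..N} Gk) \<inter> (\<Inter>p\<in>P. invp (alph (SUPV p)) (Lm (SUPV p)))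
               \<inter> (\<Inter>q\<in>Q. invp (alph (CO q)) (Lm (CO q))))"
    \<comment> \<open>(H3)\<close>
    and LOCp_ctrl: "\<forall>p\<in>P. \<forall>a\<in>Sc \<inter> alph (Gsub N Gk (Se p)).
               is_local_controller So a (LOCp a p) \<and> alph (LOCp a p) \<subseteq> alph (Gsub N Gk (Se p))"
    and H3p_c: "\<forall>p\<in>P. Lc (Gsub N Gk (Se p)) \<inter>
                 (\<Inter>a\<in>Sc \<inter> alph (Gsub N Gk (Se p)). invp (alph (LOCp a p)) (Lc (LOCp a p)))
               = Lc (Gsub N Gk (Se p)) \<inter> Lc (SUPV p)"
    and H3p_m: "\<forall>p\<in>P. Lm (Gsub N Gk (Se p)) \<inter>
                 (\<Inter>a\<in>Sc \<inter> alph (Gsub N Gk (Se p)). invp (alph (LOCp a p)) (Lm (LOCp a p)))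
               = Lm (Gsub N Gk (Se p)) \<inter> Lm (SUPV p)"
    and LOCq_ctrl: "\<forall>q\<in>Q. \<forall>a\<in>Sc \<inter> alph (CO q).
               is_local_controller So a (LOCq a q) \<and> alph (LOCq a q) \<subseteq> alph (CO q)"
    and H3q_c: "\<forall>q\<in>Q. Lc (gprod {1..N} Gk) \<inter>
                 (\<Inter>a\<in>Sc \<inter> alph (CO q). invp (alph (LOCq a q)) (Lc (LOCq a q)))
               = Lc (gprod {1..N} Gk) \<inter> invp (alph (CO q)) (Lc (CO q))"
    and H3q_m: "\<forall>q\<in>Q. Lm (gprod {1..N} Gk) \<inter>
                 (\<Inter>a\<in>Sc \<inter> alph (CO q). invp (alph (LOCq a q)) (Lm (LOCq a q)))
               = Lm (gprod {1..N} Gk) \<inter> invp (alph (CO q)) (Lm (CO q))"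
  shows "(\<forall>a\<in>Sc. is_local_controller So a
              (LOCalpha P (\<lambda>p. alph (Gsub N Gk (Se p))) Q (\<lambda>q. alph (CO q)) LOCp LOCq a))
    \<and> Lm (gprod {1..N} Gk) \<inter>
        (\<Inter>a\<in>Sc. invp (alph (LOCalpha P (\<lambda>p. alph (Gsub N Gk (Se p))) Q (\<lambda>q. alph (CO q)) LOCp LOCq a))
                      (Lm (LOCalpha P (\<lambda>p. alph (Gsub N Gk (Se p))) Q (\<lambda>q. alph (CO q)) LOCp LOCq a)))
      \<subseteq> Lm (gprod {1..N} Gk) \<inter> invp (\<Union>p\<in>P. Se p) (syncL P Se E)
    \<and> Lc (gprod {1..N} Gk) \<inter>
        (\<Inter>a\<in>Sc. invp (alph (LOCalpha P (\<lambda>p. alph (Gsub N Gk (Se p))) Q (\<lambda>q. alph (CO q)) LOCp LOCq a))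
                      (Lc (LOCalpha P (\<lambda>p. alph (Gsub N Gk (Se p))) Q (\<lambda>q. alph (CO q)) LOCp LOCq a)))
      = pre (Lm (gprod {1..N} Gk) \<inter>
        (\<Inter>a\<in>Sc. invp (alph (LOCalpha P (\<lambda>p. alph (Gsub N Gk (Se p))) Q (\<lambda>q. alph (CO q)) LOCp LOCq a))
                      (Lm (LOCalpha P (\<lambda>p. alph (Gsub N Gk (Se p))) Q (\<lambda>q. alph (CO q)) LOCp LOCq a))))
    \<and> Lc (gprod {1..N} Gk) \<inter>
        (\<Inter>a\<in>Sc. invp (alph (LOCalpha P (\<lambda>p. alph (Gsub N Gk (Se p))) Q (\<lambda>q. alph (CO q)) LOCp LOCq a))
                      (Lc (LOCalpha P (\<lambda>p. alph (Gsub N Gk (Se p))) Q (\<lambda>q. alph (CO q)) LOCp LOCq a)))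
      = Lc (gprod {1..N} Gk) \<inter> (\<Inter>p\<in>P. invp (alph (SUPV p)) (Lc (SUPV p)))
               \<inter> (\<Inter>q\<in>Q. invp (alph (CO q)) (Lc (CO q)))
    \<and> Lm (gprod {1..N} Gk) \<inter>
        (\<Inter>a\<in>Sc. invp (alph (LOCalpha P (\<lambda>p. alph (Gsub N Gk (Se p))) Q (\<lambda>q. alph (CO q)) LOCp LOCq a))
                      (Lm (LOCalpha P (\<lambda>p. alph (Gsub N Gk (Se p))) Q (\<lambda>q. alph (CO q)) LOCp LOCq a)))
      = Lm (gprod {1..N} Gk) \<inter> (\<Inter>p\<in>P. invp (alph (SUPV p)) (Lm (SUPV p)))
               \<inter> (\<Inter>q\<in>Q. invp (alph (CO q)) (Lm (CO q)))"
proof -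
  (* Only the inclusions L(G) <= P_p^-1 L(G_p) are needed. *)
  define G where "G = gprod {1..N} Gk"
  define Gp where "Gp p = Gsub N Gk (Se p)" for p
  define LOC where "LOC = LOCalpha P (\<lambda>p. alph (Gp p)) Q (\<lambda>q. alph (CO q)) LOCp LOCq"
  have components: "{k \<in> {1..N}. alph (Gk k) \<inter> Se p \<noteq> {}} \<subseteq> {1..N}" for p
    by auto
  have plant_c: "\<forall>p\<in>P. Lc G \<subseteq> invp (alph (Gp p)) (Lc (Gp p))"
    and plant_m: "\<forall>p\<in>P. Lm G \<subseteq> invp (alph (Gp p)) (Lm (Gp p))"
    using Lc_gprod_subset_invp[OF plant_wf components] Lm_gprod_subset_invp[OF plant_wf components]
    by (simp_all add: G_def Gp_def Gsub_def)
  have LOCp_alph: "\<forall>p\<in>P. \<forall>a\<in>Sc \<inter> alph (Gp p). alph (LOCp a p) \<subseteq> alph (Gp p)"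
    using LOCp_ctrl by (simp add: Gp_def)
  have LOC_wf: "\<forall>p\<in>P. a \<in> alph (Gp p) \<longrightarrow> wf_gen (LOCp a p)"
    "\<forall>q\<in>Q. a \<in> alph (CO q) \<longrightarrow> wf_gen (LOCq a q)" if "a \<in> Sc" for a
    using LOCp_ctrl LOCq_ctrl that by (auto simp: Gp_def is_local_controller_def)
  have SUP_alph: "(\<Inter>p\<in>P. invp (alph (SUPV p)) (X p)) = (\<Inter>p\<in>P. invp (alph (Gp p)) (X p))" for X
    using SUP_wf by (simp add: Gp_def)
  have closed: "Lc G \<inter> (\<Inter>a\<in>Sc. invp (alph (LOC a)) (Lc (LOC a))) =
      Lc G \<inter> (\<Inter>p\<in>P. invp (alph (SUPV p)) (Lc (SUPV p))) \<inter> (\<Inter>q\<in>Q. invp (alph (CO q)) (Lc (CO q)))"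
    using plant_Int_local_controllers_eq[OF plant_c _ LOCp_alph, where Ls = "\<lambda>p. Lc (SUPV p)"]
      H3p_c H3q_c LOC_wf
    by (simp add: LOC_def invp_Lc_LOCalpha SUP_alph Gp_def G_def)
  have marked: "Lm G \<inter> (\<Inter>a\<in>Sc. invp (alph (LOC a)) (Lm (LOC a))) =
      Lm G \<inter> (\<Inter>p\<in>P. invp (alph (SUPV p)) (Lm (SUPV p))) \<inter> (\<Inter>q\<in>Q. invp (alph (CO q)) (Lm (CO q)))"
    using plant_Int_local_controllers_eq[OF plant_m _ LOCp_alph, where Ls = "\<lambda>p. Lm (SUPV p)"]
      H3p_m H3q_m LOC_wf
    by (simp add: LOC_def invp_Lm_LOCalpha SUP_alph Gp_def G_def)
  have spec: "Lm G \<inter> invp (alph (SUPV p)) (Lm (SUPV p)) \<subseteq> invp (Se p) (E p)" if "p \<in> P" for p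
    using Int_invp_supervisor_subset[OF plant_m[rule_format, OF that]
        H1m[rule_format, OF that, folded Gp_def]] Gp_alph SUP_wf that
    by (simp add: Gp_def)
  have meets_spec: "Lm G \<inter> (\<Inter>a\<in>Sc. invp (alph (LOC a)) (Lm (LOC a))) \<subseteq>
      Lm G \<inter> invp (\<Union>p\<in>P. Se p) (syncL P Se E)"
    unfolding marked invp_syncL using spec by blast
  have local_controllers: "\<forall>a\<in>Sc. is_local_controller So a (LOC a)"
    using LOCp_ctrl LOCq_ctrl P_fin Q_fin
    by (auto simp: LOC_def Gp_def intro!: is_local_controller_LOCalpha)
  have nonblocking: "Lc G \<inter> (\<Inter>a\<in>Sc. invp (alph (LOC a)) (Lc (LOC a))) =
      pre (Lm G \<inter> (\<Inter>a\<in>Sc. invp (alph (LOC a)) (Lm (LOC a))))"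
    unfolding closed marked using H2 by (simp add: G_def)
  show ?thesis
    unfolding G_def [symmetric] Gp_def [symmetric] LOC_def [symmetric]
    by (intro conjI local_controllers meets_spec nonblocking closed marked)
qed

end
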